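(* There is an absolute constant $A>0$ such that for every $r\ge1$ there exists a function $h:\mathbb{R}\to\mathbb{R}$ with $h(x)=x$ for all $x\in[-r,r]$, such that $$\int_{\mathbb{R}}|\hat h(\omega)|\,d\omega\le A r^{3/2}\quad\text{and}\quad\int_{\mathbb{R}}|\omega|\,|\hat h(\omega)|\,d\omega\le A r^{1/2}.$$
   Context: Fourier transform: $\hat h(\omega)=\frac{1}{2\pi}\int_{\mathbb{R}}h(x)e^{-i\omega x}dx$. *)

theory Defs
  imports "HOL-Analysis.Analysis"
begin

definition fourier :: "(real \<Rightarrow> real) \<Rightarrow> real \<Rightarrow> complex" where
  "fourier h \<omega> = complex_of_real (1 / (2 * pi)) *
     (LINT x|lborel. complex_of_real (h x) * exp (- (\<i> * complex_of_real (\<omega> * x))))"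

end

theory Submission
  imports Defs
begin

text \<open>The function is the cubic spline \<open>h = S(x\<^sup>3\<^sub>+) / (6 r\<^sup>2)\<close>, where \<open>S\<close> is an odd
  finite-difference stencil with knots \<open>\<plusminus>r, \<dots>, \<plusminus>4r\<close>, chosen so that \<open>h\<close> is supported in
  \<open>[-4r, 4r]\<close> and equals \<open>x\<close> on \<open>[-r, r]\<close>. Since \<open>|h| = O(r)\<close> we get \<open>|\<hat>h| = O(r\<^sup>2)\<close>. Since
  \<open>h\<close>, \<open>h'\<close>, \<open>h''\<close> vanish at \<open>\<plusminus>4r\<close> and \<open>h'''\<close> is a step function of size \<open>O(1/r\<^sup>2)\<close>, three
  integrations by parts give \<open>|\<hat>h(\<omega>)| = O(1 / (r |\<omega>|\<^sup>3))\<close>. Together these give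
  \<open>|\<hat>h(\<omega>)| \<le> C r\<^sup>2 / (1 + (r\<omega>)\<^sup>2)\<close> and \<open>|\<omega>| |\<hat>h(\<omega>)| \<le> C r / (1 + (r\<omega>)\<^sup>2)\<close>, whose integrals
  are \<open>C\<pi>r\<close> and \<open>C\<pi>\<close>.\<close>

lemma fourier_kernel_has_vector_derivative:
  "((\<lambda>x. exp (- (\<i> * of_real (\<omega> * x)))) has_vector_derivative
     - (\<i> * of_real \<omega>) * exp (- (\<i> * of_real (\<omega> * x)))) (at x)"
proof -
  have "((\<lambda>z. exp (- (\<i> * of_real \<omega> * z))) has_field_derivative
      - (\<i> * of_real \<omega>) * exp (- (\<i> * of_real \<omega> * of_real x))) (at (of_real x))"
    by (auto intro!: derivative_eq_intros)
  from has_vector_derivative_real_field[OF this] show ?thesis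
    by (simp add: mult.assoc)
qed

lemma has_integral_fourier_kernel_by_parts:
  fixes u u' :: "real \<Rightarrow> complex"
  assumes "a \<le> b" "finite S" "continuous_on {a..b} u"
    and "\<And>x. x \<in> {a<..<b} - S \<Longrightarrow> (u has_vector_derivative u' x) (at x)"
    and "u a = 0" "u b = 0"
  shows "((\<lambda>x. u' x * exp (- (\<i> * of_real (\<omega> * x)))) has_integral
      \<i> * of_real \<omega> * integral {a..b} (\<lambda>x. u x * exp (- (\<i> * of_real (\<omega> * x))))) {a..b}"
proof -
  define E where "E x = exp (- (\<i> * complex_of_real (\<omega> * x)))" for x
  have dE: "(E has_vector_derivative - (\<i> * of_real \<omega>) * E x) (at x)" for x
    unfolding E_def[abs_def] by (rule fourier_kernel_has_vector_derivative)
  have "continuous_on {a..b} (\<lambda>x. u x * E x)"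
    unfolding E_def by (intro continuous_intros assms(3))
  then have uE: "((\<lambda>x. u x * E x) has_integral integral {a..b} (\<lambda>x. u x * E x)) {a..b}"
    using integrable_continuous_interval by blast
  have "((\<lambda>x. u' x * E x - \<i> * of_real \<omega> * (u x * E x)) has_integral u b * E b - u a * E a) {a..b}"
  proof (rule fundamental_theorem_of_calculus_interior_strong[OF assms(2,1)])
    fix x
    assume "x \<in> {a<..<b} - S"
    from has_vector_derivative_mult[OF assms(4)[OF this] dE]
    show "((\<lambda>x. u x * E x) has_vector_derivative u' x * E x - \<i> * of_real \<omega> * (u x * E x)) (at x)"
      by (simp add: algebra_simps)
  qed fact
  from has_integral_add[OF this has_integral_mult_right[OF uE, of "\<i> * of_real \<omega>"]]
  show ?thesis
    using assms(5,6) by (simp add: E_def)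
qed

lemma fourier_eq_interval_integral:
  assumes "integrable lborel h" "\<And>x. x \<notin> {a..b} \<Longrightarrow> h x = 0"
  shows "fourier h \<omega> = of_real (1 / (2*pi)) *
    integral {a..b} (\<lambda>x. of_real (h x) * exp (- (\<i> * of_real (\<omega> * x))))"
proof -
  define f where "f x = complex_of_real (h x) * exp (- (\<i> * complex_of_real (\<omega> * x)))" for x
  have "f \<in> borel_measurable lborel"
    using borel_measurable_integrable[OF assms(1)] unfolding f_def by measurable
  then have "integrable lborel f"
    by (rule Bochner_Integration.integrable_bound[OF assms(1)])
       (simp add: f_def norm_mult norm_exp_eq_Re)
  then have "(f has_integral (LINT x|lborel. f x)) UNIV"
    by (rule has_integral_integral_lborel)
  moreover have "(\<lambda>x. if x \<in> {a..b} then f x else 0) = f"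
    using assms(2) by (auto simp: fun_eq_iff f_def)
  ultimately have "integral {a..b} f = (LINT x|lborel. f x)"
    using has_integral_restrict_UNIV[of "{a..b}" f] integral_unique by simp
  then show ?thesis
    by (simp add: fourier_def f_def[abs_def])
qed

lemma norm_fourier_le_norm_interval_integral:
  assumes "integrable lborel h" "\<And>x. x \<notin> {a..b} \<Longrightarrow> h x = 0"
  shows "norm (fourier h \<omega>) \<le>
    norm (integral {a..b} (\<lambda>x. of_real (h x) * exp (- (\<i> * of_real (\<omega> * x)))))"
  using fourier_eq_interval_integral[OF assms] pi_gt3
  by (simp add: norm_divide divide_le_eq mult_le_cancel_left1)

lemma nn_integral_lorentzian:
  assumes "0 < r"
  shows "(\<integral>\<^sup>+ \<omega>. ennreal (r / (1 + (r*\<omega>)^2)) \<partial>lborel) = ennreal pi"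
proof -
  let ?f = "\<lambda>\<omega>::real. r / (1 + (r*\<omega>)^2)"
  have pos: "0 < 1 + (r*x)^2" for x
    by (simp add: add_pos_nonneg)
  then have nonzero: "1 + (r*x)^2 \<noteq> 0" for x
    by (metis less_irrefl)
  have deriv: "((\<lambda>x. arctan (r*x)) has_real_derivative ?f x) (at x)" for x
    using pos[of x] by (auto intro!: derivative_eq_intros simp: field_simps power2_eq_square)
  have "filterlim (\<lambda>x. r*x) at_top at_top" "filterlim (\<lambda>x. r*x) at_bot at_bot"
    using assms by (auto intro!: filterlim_tendsto_pos_mult_at_top filterlim_tendsto_pos_mult_at_bot
        filterlim_ident)
  then have "((\<lambda>x. arctan (r*x)) \<longlongrightarrow> pi/2) at_top" "((\<lambda>x. arctan (r*x)) \<longlongrightarrow> - (pi/2)) at_bot"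
    by (auto intro: filterlim_compose[OF tendsto_arctan_at_top] filterlim_compose[OF tendsto_arctan_at_bot])
  then have "set_integrable lborel (einterval (-\<infinity>) \<infinity>) ?f \<and> (LBINT x=-\<infinity>..\<infinity>. ?f x) = pi/2 - (- (pi/2))"
    using deriv pos assms
    by (intro conjI interval_integral_FTC_nonneg[where F = "\<lambda>x. arctan (r*x)"])
       (auto intro!: continuous_intros simp: ereal_tendsto_simps1 ereal_tendsto_simps2 less_imp_le nonzero)
  then have "integrable lborel ?f" "(LINT x|lborel. ?f x) = pi"
    by (simp_all add: einterval_eq_UNIV set_integrable_def interval_lebesgue_integral_def set_lebesgue_integral_def)
  then show ?thesis
    using assms pos by (subst nn_integral_eq_integral) (auto intro: less_imp_le)
qed

lemma nn_integral_le_of_lorentzian_bound: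
  assumes "0 < r" "0 \<le> C" "\<And>\<omega>. g \<omega> * (1 + (r*\<omega>)^2) \<le> C * r"
  shows "(\<integral>\<^sup>+ \<omega>. ennreal (g \<omega>) \<partial>lborel) \<le> ennreal (C * pi)"
proof -
  have "g \<omega> \<le> C * (r / (1 + (r*\<omega>)^2))" for \<omega>
    using assms(3)[of \<omega>] by (simp add: add_pos_nonneg pos_le_divide_eq)
  then have "(\<integral>\<^sup>+ \<omega>. ennreal (g \<omega>) \<partial>lborel)
      \<le> (\<integral>\<^sup>+ \<omega>. ennreal C * ennreal (r / (1 + (r*\<omega>)^2)) \<partial>lborel)"
    using assms(2) by (intro nn_integral_mono) (simp add: ennreal_mult' [symmetric] ennreal_leI)
  also have "\<dots> = ennreal C * ennreal pi"
    using assms(1) by (simp add: nn_integral_cmult nn_integral_lorentzian)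
  finally show ?thesis
    using assms(2) by (simp add: ennreal_mult')
qed

lemma mult_one_plus_square_le_of_cube_bound:
  fixes N t B :: real
  assumes "0 \<le> N" "0 \<le> t" "N \<le> B" "N * t^3 \<le> B"
  shows "N * (1 + t^2) \<le> 2 * B" and "t * N * (1 + t^2) \<le> 2 * B"
proof -
  have "N * (1 + t^2) \<le> 2 * B \<and> N * (t * (1 + t^2)) \<le> 2 * B"
  proof (cases "t \<le> 1")
    case True
    then have "t^2 \<le> 1"
      using assms(2) by (simp add: power_le_one)
    then have "1 + t^2 \<le> 2" "t * (1 + t^2) \<le> 2"
      using True assms(2) by (auto intro: mult_le_one[of t "(1 + t^2) / 2", simplified])
    then show ?thesis
      using assms(1,3) mult_left_mono[of _ 2 N] by fastforce
  next
    case False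
    then have "1 \<le> t^3" "t \<le> t^3" "t^2 \<le> t^3"
      by (simp_all add: one_le_power power_increasing[of 1 3 t, simplified] power_increasing[of 2 3 t])
    then have "1 + t^2 \<le> 2 * t^3" "t * (1 + t^2) \<le> 2 * t^3"
      by (simp_all add: algebra_simps power2_eq_square power3_eq_cube)
    then show ?thesis
      using assms(1,4) mult_left_mono[of _ "2 * t^3" N] by fastforce
  qed
  then show "N * (1 + t^2) \<le> 2 * B" "t * N * (1 + t^2) \<le> 2 * B"
    by (simp_all add: mult.assoc mult.left_commute)
qed

definition truncpow :: "nat \<Rightarrow> real \<Rightarrow> real" where
  "truncpow n y = (if 0 < y then y ^ n else 0)"

lemma truncpow_eq_max_power: "n \<noteq> 0 \<Longrightarrow> truncpow n y = (max 0 y) ^ n"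
  by (simp add: truncpow_def max_def)

lemma truncpow_nonneg_arg: "n \<noteq> 0 \<Longrightarrow> 0 \<le> y \<Longrightarrow> truncpow n y = y ^ n"
  by (simp add: truncpow_eq_max_power)

lemma continuous_on_truncpow: "n \<noteq> 0 \<Longrightarrow> continuous_on A (truncpow n)"
  by (simp add: truncpow_eq_max_power continuous_intros)

lemma truncpow_nonneg: "0 \<le> truncpow n y"
  by (simp add: truncpow_def)

lemma truncpow_le_power: "\<bar>y\<bar> \<le> M \<Longrightarrow> truncpow n y \<le> M ^ n"
  by (simp add: truncpow_def power_mono)

lemma truncpow_has_real_derivative:
  assumes "y \<noteq> 0"
  shows "(truncpow (Suc n) has_real_derivative of_nat (Suc n) * truncpow n y) (at y)"
proof (cases "0 < y")
  case True
  have "((\<lambda>z. z ^ Suc n) has_real_derivative of_nat (Suc n) * truncpow n y) (at y)"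
    using True DERIV_pow[of "Suc n" y] by (simp add: truncpow_def)
  then show ?thesis
    by (rule has_field_derivative_transform_within_open[where S = "{0<..}"])
       (use True in \<open>auto simp: truncpow_def\<close>)
next
  case False
  with assms have "y < 0" by simp
  have "((\<lambda>_. 0) has_real_derivative of_nat (Suc n) * truncpow n y) (at y)"
    using \<open>y < 0\<close> by (simp add: truncpow_def)
  then show ?thesis
    by (rule has_field_derivative_transform_within_open[where S = "{..<0}"])
       (use \<open>y < 0\<close> in \<open>auto simp: truncpow_def\<close>)
qed

text \<open>The weights \<open>c\<^sub>k = 3, -8, 7, -2\<close> satisfy \<open>\<Sum>c\<^sub>k = \<Sum>k c\<^sub>k = \<Sum>k\<^sup>3 c\<^sub>k = 0\<close> and
  \<open>\<Sum>k\<^sup>2 c\<^sub>k = 2\<close>: this kills the stencil of a truncated power of degree \<open>\<le> 3\<close> to the right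
  of all knots and makes the stencil of the cubic one equal to \<open>6 r\<^sup>2 x\<close> on \<open>[-r, r]\<close>.\<close>

definition stencil :: "real \<Rightarrow> (real \<Rightarrow> real) \<Rightarrow> real \<Rightarrow> real" where
  "stencil r f x = 3 * (f (x + r) - f (x - r)) - 8 * (f (x + 2*r) - f (x - 2*r))
     + 7 * (f (x + 3*r) - f (x - 3*r)) - 2 * (f (x + 4*r) - f (x - 4*r))"

abbreviation stencil_offsets :: "real set" where
  "stencil_offsets \<equiv> {-4, -3, -2, -1, 1, 2, 3, 4}"

lemma stencil_cmult: "stencil r (\<lambda>y. c * f y) x = c * stencil r f x"
  by (simp add: stencil_def algebra_simps)

lemma stencil_has_real_derivative:
  assumes "\<And>k. k \<in> stencil_offsets \<Longrightarrow> (f has_real_derivative f' (x + k*r)) (at (x + k*r))"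
  shows "(stencil r f has_real_derivative stencil r f' x) (at x)"
proof -
  have shift: "((\<lambda>x. f (x + k*r)) has_real_derivative f' (x + k*r)) (at x)"
    if "k \<in> stencil_offsets" for k
    using DERIV_shift assms[OF that] by blast
  show ?thesis
    unfolding stencil_def[abs_def]
    using shift[of 1] shift[of "-1"] shift[of 2] shift[of "-2"]
      shift[of 3] shift[of "-3"] shift[of 4] shift[of "-4"]
    by (auto intro!: derivative_eq_intros simp: algebra_simps)
qed

lemma continuous_on_stencil:
  assumes "continuous_on UNIV f"
  shows "continuous_on A (stencil r f)"
proof -
  have shift: "continuous_on A (\<lambda>x. f (x + c))" for c
    by (rule continuous_on_compose2[OF assms]) (auto intro: continuous_intros)
  show ?thesis
    unfolding stencil_def[abs_def]
    using shift[of r] shift[of "-r"] shift[of "2*r"] shift[of "-2*r"]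
      shift[of "3*r"] shift[of "-3*r"] shift[of "4*r"] shift[of "-4*r"]
    by (auto intro!: continuous_intros)
qed

lemma abs_stencil_le:
  assumes "\<And>k. k \<in> stencil_offsets \<Longrightarrow> 0 \<le> f (x + k*r) \<and> f (x + k*r) \<le> M"
  shows "\<bar>stencil r f x\<bar> \<le> 20 * M"
  using assms[of 1] assms[of "-1"] assms[of 2] assms[of "-2"]
    assms[of 3] assms[of "-3"] assms[of 4] assms[of "-4"]
  by (simp add: stencil_def abs_le_iff)

lemma stencil_eq_0_left:
  assumes "0 < r" "x \<le> -4*r" "\<And>y. y \<le> 0 \<Longrightarrow> f y = 0"
  shows "stencil r f x = 0"
  using assms by (simp add: stencil_def)

lemma stencil_truncpow_eq_0_right:
  assumes "0 < r" "4*r \<le> x" "n \<in> {1, 2, 3}"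
  shows "stencil r (truncpow n) x = 0"
proof -
  have "stencil r (truncpow n) x = stencil r (\<lambda>y. y ^ n) x"
    using assms by (subgoal_tac "n \<noteq> 0") (auto simp: stencil_def truncpow_nonneg_arg)
  also have "\<dots> = 0"
    using assms(3) by (auto simp: stencil_def algebra_simps power2_eq_square power3_eq_cube)
  finally show ?thesis .
qed

lemma stencil_truncpow_3_centre:
  assumes "0 < r" "\<bar>x\<bar> \<le> r"
  shows "stencil r (truncpow 3) x = 6 * r^2 * x"
proof -
  have "stencil r (truncpow 3) x
      = 3*(x+r)^3 - 8*(x+2*r)^3 + 7*(x+3*r)^3 - 2*(x+4*r)^3"
    using assms by (simp add: stencil_def truncpow_nonneg_arg truncpow_def[of _ "x - _"] abs_le_iff)
  also have "\<dots> = 6 * r^2 * x"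
    by (simp add: algebra_simps power2_eq_square power3_eq_cube)
  finally show ?thesis .
qed

definition stencil_spline :: "real \<Rightarrow> nat \<Rightarrow> real \<Rightarrow> real" where
  "stencil_spline r n x = stencil r (truncpow n) x / (fact n * r^2)"

lemma stencil_spline_has_real_derivative:
  assumes "x \<notin> {-4*r, -3*r, -2*r, -r, r, 2*r, 3*r, 4*r}"
  shows "(stencil_spline r (Suc n) has_real_derivative stencil_spline r n x) (at x)"
proof -
  have "x + k*r \<noteq> 0" if "k \<in> stencil_offsets" for k
    using assms that by (auto simp: algebra_simps)
  then have "(stencil r (truncpow (Suc n)) has_real_derivative
      stencil r (\<lambda>y. of_nat (Suc n) * truncpow n y) x) (at x)"
    by (intro stencil_has_real_derivative truncpow_has_real_derivative)
  then have "(stencil r (truncpow (Suc n)) has_real_derivative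
      of_nat (Suc n) * stencil r (truncpow n) x) (at x)"
    by (simp only: stencil_cmult)
  moreover have "of_nat (Suc n) * s / (fact (Suc n) * r^2) = s / (fact n * r^2)" for s
    by (simp del: of_nat_Suc add: fact_Suc)
  ultimately show ?thesis
    unfolding stencil_spline_def[abs_def] by (metis DERIV_cdivide)
qed

lemma continuous_on_stencil_spline: "n \<noteq> 0 \<Longrightarrow> continuous_on A (stencil_spline r n)"
  unfolding stencil_spline_def[abs_def] divide_inverse
  by (intro continuous_intros continuous_on_stencil continuous_on_truncpow) simp

lemma stencil_spline_eq_0:
  assumes "0 < r" "x \<notin> {-4*r<..<4*r}" "n \<in> {1, 2, 3}"
  shows "stencil_spline r n x = 0"
  using assms stencil_truncpow_eq_0_right[of r x n] stencil_eq_0_left[of r x "truncpow n"]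
  by (cases "0 \<le> x") (auto simp: stencil_spline_def truncpow_def not_less)

lemma stencil_spline_3_centre: "0 < r \<Longrightarrow> \<bar>x\<bar> \<le> r \<Longrightarrow> stencil_spline r 3 x = x"
  by (simp add: stencil_spline_def stencil_truncpow_3_centre fact_numeral)

lemma abs_stencil_spline_le:
  assumes "0 < r" "\<bar>x\<bar> \<le> 4*r"
  shows "\<bar>stencil_spline r n x\<bar> \<le> 20 * (8*r)^n / (fact n * r^2)"
proof -
  have "\<bar>stencil r (truncpow n) x\<bar> \<le> 20 * (8*r)^n"
  proof (rule abs_stencil_le)
    fix k :: real
    assume "k \<in> stencil_offsets"
    then have "\<bar>x + k*r\<bar> \<le> 8*r"
      using assms by (auto simp: abs_le_iff)
    then show "0 \<le> truncpow n (x + k*r) \<and> truncpow n (x + k*r) \<le> (8*r)^n"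
      using truncpow_nonneg truncpow_le_power by blast
  qed
  then show ?thesis
    using assms by (simp add: stencil_spline_def abs_div divide_right_mono)
qed

lemma integrable_stencil_spline:
  assumes "0 < r" "n \<in> {1, 2, 3}"
  shows "integrable lborel (stencil_spline r n)"
proof -
  have "integrable lborel (\<lambda>x. indicator {-4*r..4*r} x *\<^sub>R stencil_spline r n x)"
    using assms by (intro borel_integrable_compact continuous_on_stencil_spline) auto
  moreover have "stencil_spline r n x = 0" if "x \<notin> {-4*r..4*r}" for x
    using assms that by (intro stencil_spline_eq_0) auto
  then have "(\<lambda>x. indicator {-4*r..4*r} x *\<^sub>R stencil_spline r n x) = stencil_spline r n"
    by (auto simp: fun_eq_iff indicator_def)
  ultimately show ?thesis
    by simp
qed

lemma has_integral_stencil_spline_fourier_kernel: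
  assumes "0 < r" "n \<in> {0, 1, 2}"
  shows "((\<lambda>x. of_real (stencil_spline r n x) * exp (- (\<i> * of_real (\<omega> * x)))) has_integral
      \<i> * of_real \<omega> * integral {-4*r..4*r}
        (\<lambda>x. of_real (stencil_spline r (Suc n) x) * exp (- (\<i> * of_real (\<omega> * x))))) {-4*r..4*r}"
proof (rule has_integral_fourier_kernel_by_parts[where S = "{-4*r, -3*r, -2*r, -r, r, 2*r, 3*r, 4*r}"])
  show "continuous_on {-4*r..4*r} (\<lambda>x. complex_of_real (stencil_spline r (Suc n) x))"
    by (intro continuous_intros continuous_on_stencil_spline) simp
  show "((\<lambda>x. complex_of_real (stencil_spline r (Suc n) x)) has_vector_derivative
      complex_of_real (stencil_spline r n x)) (at x)"
    if "x \<in> {-4*r<..<4*r} - {-4*r, -3*r, -2*r, -r, r, 2*r, 3*r, 4*r}" for x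
    using that by (intro has_vector_derivative_of_real stencil_spline_has_real_derivative) auto
  show "complex_of_real (stencil_spline r (Suc n) (-4*r)) = 0"
       "complex_of_real (stencil_spline r (Suc n) (4*r)) = 0"
    using assms by (auto intro: stencil_spline_eq_0)
qed (use assms in auto)

lemma has_integral_stencil_spline_0_fourier_kernel:
  assumes "0 < r"
  shows "((\<lambda>x. of_real (stencil_spline r 0 x) * exp (- (\<i> * of_real (\<omega> * x)))) has_integral
      (\<i> * of_real \<omega>)^3 * integral {-4*r..4*r}
        (\<lambda>x. of_real (stencil_spline r 3 x) * exp (- (\<i> * of_real (\<omega> * x))))) {-4*r..4*r}"
proof -
  define J where "J n = integral {-4*r..4*r}
    (\<lambda>x. of_real (stencil_spline r n x) * exp (- (\<i> * of_real (\<omega> * x))))" for n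
  have "J n = \<i> * of_real \<omega> * J (Suc n)" if "n \<in> {1, 2}" for n
    unfolding J_def using integral_unique[OF has_integral_stencil_spline_fourier_kernel] assms that
    by simp
  then have "\<i> * of_real \<omega> * J 1 = (\<i> * of_real \<omega>)^3 * J 3"
    by (simp add: power3_eq_cube numeral_3_eq_3)
  with has_integral_stencil_spline_fourier_kernel[OF assms, of 0 \<omega>] show ?thesis
    by (simp add: J_def)
qed

lemma norm_fourier_stencil_spline_le:
  assumes "0 < r"
  shows "norm (fourier (stencil_spline r 3) \<omega>) \<le> 16000 * r^2"
proof -
  define f where "f x = of_real (stencil_spline r 3 x) * exp (- (\<i> * of_real (\<omega> * x)))" for x
  have "continuous_on {-4*r..4*r} f"
    unfolding f_def by (intro continuous_intros continuous_on_stencil_spline) simp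
  then have "(f has_integral integral {-4*r..4*r} f) {-4*r..4*r}"
    using integrable_continuous_interval by blast
  then have "norm (integral {-4*r..4*r} f) \<le> 2000 * r * Henstock_Kurzweil_Integration.content {-4*r..4*r}"
  proof (rule has_integral_bound_real[where S = "{}", rotated 2])
    fix x
    assume "x \<in> {-4*r..4*r} - {}"
    then have "\<bar>stencil_spline r 3 x\<bar> \<le> 20 * (8*r)^3 / (fact 3 * r^2)"
      using assms by (intro abs_stencil_spline_le) auto
    also have "\<dots> \<le> 2000 * r"
      using assms by (simp add: fact_numeral power2_eq_square power3_eq_cube field_simps)
    finally show "norm (f x) \<le> 2000 * r"
      by (simp add: f_def norm_mult norm_exp_eq_Re)
  qed (use assms in auto)
  moreover have "norm (fourier (stencil_spline r 3) \<omega>) \<le> norm (integral {-4*r..4*r} f)"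
    unfolding f_def
    by (rule norm_fourier_le_norm_interval_integral)
       (use assms in \<open>auto intro: integrable_stencil_spline stencil_spline_eq_0\<close>)
  ultimately show ?thesis
    using assms by (simp add: power2_eq_square)
qed

lemma norm_fourier_stencil_spline_decay:
  assumes "0 < r"
  shows "norm (fourier (stencil_spline r 3) \<omega>) * (r * \<bar>\<omega>\<bar>^3) \<le> 160"
proof -
  define J where "J = integral {-4*r..4*r}
    (\<lambda>x. of_real (stencil_spline r 3 x) * exp (- (\<i> * of_real (\<omega> * x))))"
  have "norm ((\<i> * of_real \<omega>)^3 * J) \<le> 20 / r^2 * Henstock_Kurzweil_Integration.content {-4*r..4*r}"
  proof (rule has_integral_bound_real[where S = "{}"])
    show "((\<lambda>x. of_real (stencil_spline r 0 x) * exp (- (\<i> * of_real (\<omega> * x)))) has_integral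
        (\<i> * of_real \<omega>)^3 * J) {-4*r..4*r}"
      unfolding J_def using has_integral_stencil_spline_0_fourier_kernel[OF assms] .
    fix x
    assume "x \<in> {-4*r..4*r} - {}"
    then show "norm (of_real (stencil_spline r 0 x) * exp (- (\<i> * of_real (\<omega> * x)))) \<le> 20 / r^2"
      using assms abs_stencil_spline_le[of r x 0] by (simp add: norm_mult norm_exp_eq_Re abs_le_iff)
  qed auto
  then have "norm J * (r * \<bar>\<omega>\<bar>^3) \<le> 160"
    using assms by (simp add: norm_mult norm_power power2_eq_square field_simps)
  moreover have "norm (fourier (stencil_spline r 3) \<omega>) \<le> norm J"
    unfolding J_def
    by (rule norm_fourier_le_norm_interval_integral)
       (use assms in \<open>auto intro: integrable_stencil_spline stencil_spline_eq_0\<close>)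
  ultimately show ?thesis
    using assms by (meson mult_right_mono order_trans zero_le_mult_iff zero_le_power abs_ge_zero less_imp_le)
qed

lemma norm_fourier_stencil_spline_lorentzian:
  assumes "0 < r"
  shows "norm (fourier (stencil_spline r 3) \<omega>) * (1 + (r*\<omega>)^2) \<le> 32000 * r * r"
    and "\<bar>\<omega>\<bar> * norm (fourier (stencil_spline r 3) \<omega>) * (1 + (r*\<omega>)^2) \<le> 32000 * r"
proof -
  define N where "N = norm (fourier (stencil_spline r 3) \<omega>)"
  define t where "t = r * \<bar>\<omega>\<bar>"
  have "N * t^3 = r^2 * (N * (r * \<bar>\<omega>\<bar>^3))"
    by (simp add: t_def power_mult_distrib power2_eq_square power3_eq_cube)
  also have "\<dots> \<le> r^2 * 160"
    unfolding N_def by (intro mult_left_mono norm_fourier_stencil_spline_decay[OF assms]) simp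
  also have "\<dots> \<le> 16000 * r^2"
    by simp
  finally have "N * t^3 \<le> 16000 * r^2" .
  moreover have "N \<le> 16000 * r^2" "0 \<le> N" "0 \<le> t"
    using norm_fourier_stencil_spline_le[OF assms] assms by (simp_all add: N_def t_def)
  moreover have "(r*\<omega>)^2 = t^2"
    by (simp add: t_def power_mult_distrib)
  ultimately have "N * (1 + (r*\<omega>)^2) \<le> 32000 * r^2" "r * (\<bar>\<omega>\<bar> * N * (1 + (r*\<omega>)^2)) \<le> 32000 * r^2"
    using mult_one_plus_square_le_of_cube_bound[of N t "16000 * r^2"] by (simp_all add: t_def mult.assoc)
  then show "norm (fourier (stencil_spline r 3) \<omega>) * (1 + (r*\<omega>)^2) \<le> 32000 * r * r"
    and "\<bar>\<omega>\<bar> * norm (fourier (stencil_spline r 3) \<omega>) * (1 + (r*\<omega>)^2) \<le> 32000 * r"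
    using assms by (simp_all add: N_def power2_eq_square mult.assoc)
qed

theorem propositionF5:
  shows "\<exists>A::real. A > 0 \<and> (\<forall>r::real. r \<ge> 1 \<longrightarrow>
    (\<exists>h::real \<Rightarrow> real. integrable lborel h \<and> (\<forall>x\<in>{-r..r}. h x = x) \<and>
       (\<integral>\<^sup>+ \<omega>. ennreal (norm (fourier h \<omega>)) \<partial>lborel) \<le> ennreal (A * r powr (3/2)) \<and>
       (\<integral>\<^sup>+ \<omega>. ennreal (\<bar>\<omega>\<bar> * norm (fourier h \<omega>)) \<partial>lborel) \<le> ennreal (A * r powr (1/2))))"
proof (intro exI[of _ "32000 * pi"] conjI allI impI)
  fix r :: real
  assume "1 \<le> r"
  then have r: "0 < r"
    by simp
  have "(\<integral>\<^sup>+ \<omega>. ennreal (norm (fourier (stencil_spline r 3) \<omega>)) \<partial>lborel) \<le> ennreal (32000 * r * pi)"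
    using r norm_fourier_stencil_spline_lorentzian(1) by (intro nn_integral_le_of_lorentzian_bound) auto
  also have "\<dots> \<le> ennreal (32000 * pi * r powr (3/2))"
    using \<open>1 \<le> r\<close> powr_mono[of 1 "3/2" r] by (intro ennreal_leI) simp
  finally have L1: "(\<integral>\<^sup>+ \<omega>. ennreal (norm (fourier (stencil_spline r 3) \<omega>)) \<partial>lborel)
      \<le> ennreal (32000 * pi * r powr (3/2))" .
  have "(\<integral>\<^sup>+ \<omega>. ennreal (\<bar>\<omega>\<bar> * norm (fourier (stencil_spline r 3) \<omega>)) \<partial>lborel) \<le> ennreal (32000 * pi)"
    using r norm_fourier_stencil_spline_lorentzian(2) by (intro nn_integral_le_of_lorentzian_bound) auto
  also have "\<dots> \<le> ennreal (32000 * pi * r powr (1/2))"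
    using \<open>1 \<le> r\<close> ge_one_powr_ge_zero[of r "1/2"] by (intro ennreal_leI) simp
  finally have L1_weighted: "(\<integral>\<^sup>+ \<omega>. ennreal (\<bar>\<omega>\<bar> * norm (fourier (stencil_spline r 3) \<omega>)) \<partial>lborel)
      \<le> ennreal (32000 * pi * r powr (1/2))" .
  show "\<exists>h::real \<Rightarrow> real. integrable lborel h \<and> (\<forall>x\<in>{-r..r}. h x = x) \<and>
       (\<integral>\<^sup>+ \<omega>. ennreal (norm (fourier h \<omega>)) \<partial>lborel) \<le> ennreal (32000 * pi * r powr (3/2)) \<and>
       (\<integral>\<^sup>+ \<omega>. ennreal (\<bar>\<omega>\<bar> * norm (fourier h \<omega>)) \<partial>lborel) \<le> ennreal (32000 * pi * r powr (1/2))"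
    using r L1 L1_weighted integrable_stencil_spline[of r 3]
    by (intro exI[of _ "stencil_spline r 3"]) (auto simp: stencil_spline_3_centre)
qed simp

end
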